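(* Let $R$ be a $\sigma$-(sps) Armendariz ring, where $\sigma$ is an endomorphism of $R$. Then: (1) $R$ is reversible if and only if $R[[x;\sigma]]$ is reversible; (2) $R$ is symmetric if and only if $R[[x;\sigma]]$ is symmetric.
   Context: All rings are associative with identity; $\sigma$ denotes a nonzero, non-identity ring endomorphism of $R$. The skew power series ring $R[[x;\sigma]]$ consists of all formal series $\sum_{i=0}^\infty a_i x^i$ with $a_i\in R$, added termwise and multiplied using distributivity and the rule $xa=\sigma(a)x$ for $a\in R$. A ring $R$ is $\sigma$-(sps) Armendariz if whenever $p=\sum_{i=0}^\infty a_ix^i$ and $q=\sum_{j=0}^\infty b_jx^j$ in $R[[x;\sigma]]$ satisfy $pq=0$, then $a_ib_j=0$ for all $i,j$. A ring $S$ is reversible if $ab=0$ implies $ba=0$ for all $a,b\in S$; $S$ is symmetric if $abc=0$ implies $acb=0$ for all $a,b,c\in S$. *)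

theory Defs
  imports Main
begin

text \<open>Skew power series over R: a series sum_i a_i x^i is represented by its
coefficient function nat => 'a. Addition is termwise; multiplication uses
x a = sigma(a) x, so (a_i x^i)(b_j x^j) = a_i sigma^i(b_j) x^(i+j).\<close>

type_synonym 'a sps = "nat \<Rightarrow> 'a"

definition ring_endo :: "('a::ring_1 \<Rightarrow> 'a) \<Rightarrow> bool" where
  "ring_endo \<sigma> \<longleftrightarrow> (\<forall>a b. \<sigma> (a + b) = \<sigma> a + \<sigma> b) \<and>
                   (\<forall>a b. \<sigma> (a * b) = \<sigma> a * \<sigma> b) \<and> \<sigma> 1 = 1"

definition sps_zero :: "'a::ring_1 sps" where
  "sps_zero = (\<lambda>_. 0)"

definition sps_mult :: "('a::ring_1 \<Rightarrow> 'a) \<Rightarrow> 'a sps \<Rightarrow> 'a sps \<Rightarrow> 'a sps" where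
  "sps_mult \<sigma> p q = (\<lambda>n. \<Sum>i\<le>n. p i * (\<sigma> ^^ i) (q (n - i)))"

definition sps_armendariz :: "('a::ring_1 \<Rightarrow> 'a) \<Rightarrow> bool" where
  "sps_armendariz \<sigma> \<longleftrightarrow>
     (\<forall>p q. sps_mult \<sigma> p q = sps_zero \<longrightarrow> (\<forall>i j. p i * q j = 0))"

definition reversible_ring :: "'a::ring_1 itself \<Rightarrow> bool" where
  "reversible_ring _ \<longleftrightarrow> (\<forall>a b :: 'a. a * b = 0 \<longrightarrow> b * a = 0)"

definition symmetric_ring :: "'a::ring_1 itself \<Rightarrow> bool" where
  "symmetric_ring _ \<longleftrightarrow> (\<forall>a b c :: 'a. a * b * c = 0 \<longrightarrow> a * c * b = 0)"

definition sps_reversible :: "('a::ring_1 \<Rightarrow> 'a) \<Rightarrow> bool" where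
  "sps_reversible \<sigma> \<longleftrightarrow>
     (\<forall>p q. sps_mult \<sigma> p q = sps_zero \<longrightarrow> sps_mult \<sigma> q p = sps_zero)"

definition sps_symmetric :: "('a::ring_1 \<Rightarrow> 'a) \<Rightarrow> bool" where
  "sps_symmetric \<sigma> \<longleftrightarrow>
     (\<forall>p q r. sps_mult \<sigma> (sps_mult \<sigma> p q) r = sps_zero \<longrightarrow>
              sps_mult \<sigma> (sps_mult \<sigma> p r) q = sps_zero)"

end

theory Submission
  imports Defs
begin

(* Constant series c (coefficient c at degree 0, zero elsewhere)
   multiply like elements of R, so reversibility and symmetry of R[[x;sigma]]
   descend to R at once.  For the converse directions the key fact is that an
   sps-Armendariz ring is sigma-compatible in one direction:
   a * b = 0 implies a * sigma^n(b) = 0 for every n (witnessed by the product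
   (a - a x) * (sum_n sigma^n(b) x^n) = 0).  Combined with the Armendariz
   property, which reduces a vanishing product of series to vanishing products
   of coefficients, reversibility resp. symmetry of R kills every term
   p_i sigma^i(q_j) of the relevant products of series. *)

definition cst :: "'a::ring_1 \<Rightarrow> 'a sps" where
  "cst c = (\<lambda>n. if n = 0 then c else 0)"

lemma cst_mult: "sps_mult \<sigma> (cst a) (cst b) = cst (a * b)"
proof
  fix n
  have "sps_mult \<sigma> (cst a) (cst b) n =
        (\<Sum>i\<le>n. if i = 0 then a * (if n = 0 then b else 0) else 0)"
    unfolding sps_mult_def cst_def by (intro sum.cong) auto
  also have "\<dots> = cst (a * b) n" by (simp add: cst_def)
  finally show "sps_mult \<sigma> (cst a) (cst b) n = cst (a * b) n" .
qed

lemma cst_eq_zero_iff: "cst c = sps_zero \<longleftrightarrow> c = 0"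
  unfolding cst_def sps_zero_def by metis

lemma sps_mult_eq_zeroI:
  assumes "\<And>i j. p i * (\<sigma> ^^ i) (q j) = 0"
  shows "sps_mult \<sigma> p q = sps_zero"
  using assms unfolding sps_mult_def sps_zero_def by simp

lemma sps_mult_scale_left:
  "sps_mult \<sigma> (\<lambda>i. c * p i) q = (\<lambda>n. c * sps_mult \<sigma> p q n)"
  unfolding sps_mult_def by (simp add: sum_distrib_left mult.assoc)

lemma sps_mult_mult_coeff:
  "sps_mult \<sigma> (sps_mult \<sigma> p r) q n =
     (\<Sum>k\<le>n. \<Sum>i\<le>k. p i * (\<sigma> ^^ i) (r (k - i)) * (\<sigma> ^^ k) (q (n - k)))"
  unfolding sps_mult_def by (simp add: sum_distrib_right)

lemma sps_armendariz_coeffD: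
  assumes "sps_armendariz \<sigma>" and "sps_mult \<sigma> p q = sps_zero"
  shows "p i * q j = 0"
  using assms unfolding sps_armendariz_def by blast

text \<open>One-sided sigma-compatibility: if a b = 0 then a sigma^n(b) = 0.  The
  product of p = a - a x and q = sum_n sigma^n(b) x^n vanishes, and the
  Armendariz property applied to the coefficients p_0 and q_n gives the claim.\<close>

lemma sps_armendariz_compatible:
  assumes arm: "sps_armendariz \<sigma>" and ab: "a * b = 0"
  shows "a * (\<sigma> ^^ n) b = 0"
proof -
  define p where "p = (\<lambda>i::nat. if i = 0 then a else if i = 1 then - a else 0)"
  define q where "q = (\<lambda>n. (\<sigma> ^^ n) b)"
  have "sps_mult \<sigma> p q m = 0" for m
  proof (cases m)
    case 0
    then show ?thesis using ab by (simp add: sps_mult_def p_def q_def)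
  next
    case (Suc k)
    have "sps_mult \<sigma> p q m =
          p 0 * q (Suc k) + (\<Sum>i\<le>k. p (Suc i) * (\<sigma> ^^ Suc i) (q (Suc k - Suc i)))"
      unfolding sps_mult_def Suc by (subst sum.atMost_Suc_shift) simp
    also have "(\<Sum>i\<le>k. p (Suc i) * (\<sigma> ^^ Suc i) (q (Suc k - Suc i))) =
               (\<Sum>i\<le>k. if i = 0 then - a * (\<sigma> ^^ Suc k) b else 0)"
      by (intro sum.cong) (auto simp: p_def q_def funpow_swap1)
    finally show ?thesis by (simp add: p_def q_def)
  qed
  then have "sps_mult \<sigma> p q = sps_zero" by (auto simp: sps_zero_def)
  then have "p 0 * q n = 0" by (rule sps_armendariz_coeffD[OF arm])
  then show ?thesis by (simp add: p_def q_def)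
qed

lemma reversibleD: "reversible_ring TYPE('a::ring_1) \<Longrightarrow> (a::'a) * b = 0 \<Longrightarrow> b * a = 0"
  unfolding reversible_ring_def by blast

lemma reversible_if_sps_reversible:
  assumes "sps_reversible (\<sigma> :: 'a::ring_1 \<Rightarrow> 'a)"
  shows "reversible_ring TYPE('a)"
  unfolding reversible_ring_def
proof (intro allI impI)
  fix a b :: 'a
  assume "a * b = 0"
  then have "sps_mult \<sigma> (cst a) (cst b) = sps_zero" by (simp add: cst_mult cst_eq_zero_iff)
  then have "sps_mult \<sigma> (cst b) (cst a) = sps_zero"
    using assms unfolding sps_reversible_def by blast
  then show "b * a = 0" by (simp add: cst_mult cst_eq_zero_iff)
qed

text \<open>If p q = 0 then p_i q_j = 0, hence q_j p_i = 0 and q_j sigma^n(p_i) = 0.\<close>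

lemma sps_reversible_if_reversible:
  assumes arm: "sps_armendariz (\<sigma> :: 'a::ring_1 \<Rightarrow> 'a)"
    and rev: "reversible_ring TYPE('a)"
  shows "sps_reversible \<sigma>"
  unfolding sps_reversible_def
proof (intro allI impI)
  fix p q
  assume pq: "sps_mult \<sigma> p q = sps_zero"
  have "q i * (\<sigma> ^^ i) (p j) = 0" for i j
    using sps_armendariz_coeffD[OF arm pq] reversibleD[OF rev] sps_armendariz_compatible[OF arm]
    by blast
  then show "sps_mult \<sigma> q p = sps_zero" by (rule sps_mult_eq_zeroI)
qed

lemma symmetricD:
  "symmetric_ring TYPE('a::ring_1) \<Longrightarrow> (a::'a) * b * c = 0 \<Longrightarrow> a * c * b = 0"
  unfolding symmetric_ring_def by blast

text \<open>Symmetric rings are reversible (take a = 1 in the definition).\<close>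

lemma reversible_if_symmetric:
  "symmetric_ring TYPE('a::ring_1) \<Longrightarrow> reversible_ring TYPE('a)"
  unfolding reversible_ring_def using symmetricD[where a = "1::'a"] by simp

lemma symmetric_if_sps_symmetric:
  assumes "sps_symmetric (\<sigma> :: 'a::ring_1 \<Rightarrow> 'a)"
  shows "symmetric_ring TYPE('a)"
  unfolding symmetric_ring_def
proof (intro allI impI)
  fix a b c :: 'a
  assume "a * b * c = 0"
  then have "sps_mult \<sigma> (sps_mult \<sigma> (cst a) (cst b)) (cst c) = sps_zero"
    by (simp add: cst_mult cst_eq_zero_iff)
  then have "sps_mult \<sigma> (sps_mult \<sigma> (cst a) (cst c)) (cst b) = sps_zero"
    using assms unfolding sps_symmetric_def by blast
  then show "a * c * b = 0" by (simp add: cst_mult cst_eq_zero_iff)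
qed

text \<open>In a symmetric Armendariz ring, (p q) r = 0 forces all products
  p_i q_j r_l of coefficients to vanish: from r_l (p q)_k = 0 for all k the
  series (r_l p) and q have zero product, so r_l p_i q_j = 0.\<close>

lemma triple_coeff_zero:
  assumes arm: "sps_armendariz (\<sigma> :: 'a::ring_1 \<Rightarrow> 'a)"
    and sym: "symmetric_ring TYPE('a)"
    and pqr: "sps_mult \<sigma> (sps_mult \<sigma> p q) r = sps_zero"
  shows "p i * q j * r l = 0"
proof -
  note revD = reversibleD[OF reversible_if_symmetric[OF sym]]
  have "r l * sps_mult \<sigma> p q k = 0" for k
    using sps_armendariz_coeffD[OF arm pqr] revD by blast
  then have "sps_mult \<sigma> (\<lambda>i. r l * p i) q = sps_zero"
    by (simp add: sps_mult_scale_left sps_zero_def)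
  then have "r l * p i * q j = 0" by (rule sps_armendariz_coeffD[OF arm])
  then show ?thesis using revD by (simp add: mult.assoc)
qed

text \<open>Each term p_i sigma^i(r_j) sigma^(i+j)(q_l) of ((p r) q) then vanishes:
  alternate symmetry (swapping the last two factors) with compatibility.\<close>

lemma skew_triple_coeff_zero:
  assumes arm: "sps_armendariz (\<sigma> :: 'a::ring_1 \<Rightarrow> 'a)"
    and sym: "symmetric_ring TYPE('a)"
    and pqr: "p i * q l * r j = 0"
  shows "p i * (\<sigma> ^^ i) (r j) * (\<sigma> ^^ (i + j)) (q l) = 0"
proof -
  have "p i * r j * q l = 0" using pqr by (rule symmetricD[OF sym])
  then have "p i * r j * (\<sigma> ^^ (i + j)) (q l) = 0" by (rule sps_armendariz_compatible[OF arm])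
  then have "p i * (\<sigma> ^^ (i + j)) (q l) * r j = 0" by (rule symmetricD[OF sym])
  then have "p i * (\<sigma> ^^ (i + j)) (q l) * (\<sigma> ^^ i) (r j) = 0"
    by (rule sps_armendariz_compatible[OF arm])
  then show ?thesis by (rule symmetricD[OF sym])
qed

lemma sps_symmetric_if_symmetric:
  assumes arm: "sps_armendariz (\<sigma> :: 'a::ring_1 \<Rightarrow> 'a)"
    and sym: "symmetric_ring TYPE('a)"
  shows "sps_symmetric \<sigma>"
  unfolding sps_symmetric_def
proof (intro allI impI)
  fix p q r
  assume pqr: "sps_mult \<sigma> (sps_mult \<sigma> p q) r = sps_zero"
  have term_zero: "p i * (\<sigma> ^^ i) (r (k - i)) * (\<sigma> ^^ k) (q m) = 0" if "i \<le> k" for i k m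
  proof -
    have "p i * q m * r (k - i) = 0" by (rule triple_coeff_zero[OF arm sym pqr])
    then have "p i * (\<sigma> ^^ i) (r (k - i)) * (\<sigma> ^^ (i + (k - i))) (q m) = 0"
      by (rule skew_triple_coeff_zero[OF arm sym])
    then show ?thesis using that by simp
  qed
  show "sps_mult \<sigma> (sps_mult \<sigma> p r) q = sps_zero"
    by (simp add: fun_eq_iff sps_mult_mult_coeff term_zero sps_zero_def)
qed

theorem proposition2p5:
  fixes \<sigma> :: "'a::ring_1 \<Rightarrow> 'a"
  assumes "ring_endo \<sigma>"
    and "\<sigma> \<noteq> (\<lambda>_. 0)"
    and "\<sigma> \<noteq> id"
    and "sps_armendariz \<sigma>"
  shows "(reversible_ring TYPE('a) \<longleftrightarrow> sps_reversible \<sigma>) \<and>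
         (symmetric_ring TYPE('a) \<longleftrightarrow> sps_symmetric \<sigma>)"
  using reversible_if_sps_reversible sps_reversible_if_reversible[OF assms(4)]
    symmetric_if_sps_symmetric sps_symmetric_if_symmetric[OF assms(4)]
  by blast

end
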